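(* Let $I\in\{0,1\}^{n\times m}$ be clarified. Then $\mathcal{E}(I)$ is an essential part of $I$, and it is the unique essential part of $I$: i.e. $\mathcal{E}(I)\leq I$, for every $\mathcal{F}\subseteq\mathcal{B}(I)$ the condition $\mathcal{E}(I)\leq A_{\mathcal{F}}\circ B_{\mathcal{F}}$ implies $I=A_{\mathcal{F}}\circ B_{\mathcal{F}}$, and every $J\leq I$ with this same property satisfies $\mathcal{E}(I)\leq J$.
   Context: $I\in\{0,1\}^{n\times m}$, $X=\{1,\dots,n\}$, $Y=\{1,\dots,m\}$. $I$ is clarified if it has no two identical rows and no two identical columns. For matrices, $J_1\leq J_2$ means entrywise $\leq$. For $C\subseteq X$, $D\subseteq Y$: $C^{\uparrow}=\{j\in Y\mid \forall i\in C: I_{ij}=1\}$, $D^{\downarrow}=\{i\in X\mid \forall j\in D: I_{ij}=1\}$. $\mathcal{B}(I)=\{\langle C,D\rangle\mid C^\uparrow=D, D^\downarrow=C\}$ with order $\langle C_1,D_1\rangle\leq\langle C_2,D_2\rangle$ iff $C_1\subseteq C_2$. $\gamma(i)=\langle\{i\}^{\uparrow\downarrow},\{i\}^{\uparrow}\rangle$, $\mu(j)=\langle\{j\}^{\downarrow},\{j\}^{\downarrow\uparrow}\rangle$, and $\mathcal{I}_{ij}=\{c\in\mathcal{B}(I)\mid \gamma(i)\leq c\leq\mu(j)\}$. $\mathcal{E}(I)\in\{0,1\}^{n\times m}$ is defined by $\mathcal{E}(I)_{ij}=1$ iff $\mathcal{I}_{ij}$ is non-empty and minimal w.r.t. $\subseteq$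 among the non-empty sets $\mathcal{I}_{i'j'}$ ($i'\in X$, $j'\in Y$). Boolean product: $(A\circ B)_{ij}=\max_l\min(A_{il},B_{lj})$. For $\mathcal{F}=\{\langle C_1,D_1\rangle,\dots,\langle C_p,D_p\rangle\}\subseteq\mathcal{B}(I)$, $(A_{\mathcal{F}})_{il}=1$ iff $i\in C_l$, $(B_{\mathcal{F}})_{lj}=1$ iff $j\in D_l$. A matrix $J\leq I$ is an essential part of $I$ if for every $\mathcal{F}\subseteq\mathcal{B}(I)$, $J\leq A_{\mathcal{F}}\circ B_{\mathcal{F}}$ implies $I=A_{\mathcal{F}}\circ B_{\mathcal{F}}$, and $J$ is minimal w.r.t. $\leq$ among matrices $J'\leq I$ with this property. *)

theory Defs
  imports Main
begin

text \<open>Boolean matrices of size n x m are functions nat => nat => bool,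
 with rows indexed by X = {1..n} and columns by Y = {1..m}; only entries in range matter.\<close>

type_synonym bmat = "nat \<Rightarrow> nat \<Rightarrow> bool"

definition rowsX :: "nat \<Rightarrow> nat set" where "rowsX n = {1..n}"
definition colsY :: "nat \<Rightarrow> nat set" where "colsY m = {1..m}"

definition mat_leq :: "nat \<Rightarrow> nat \<Rightarrow> bmat \<Rightarrow> bmat \<Rightarrow> bool" where
  "mat_leq n m J1 J2 \<longleftrightarrow> (\<forall>i\<in>rowsX n. \<forall>j\<in>colsY m. J1 i j \<longrightarrow> J2 i j)"

definition mat_eq :: "nat \<Rightarrow> nat \<Rightarrow> bmat \<Rightarrow> bmat \<Rightarrow> bool" where
  "mat_eq n m J1 J2 \<longleftrightarrow> (\<forall>i\<in>rowsX n. \<forall>j\<in>colsY m. J1 i j = J2 i j)"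

definition clarified :: "nat \<Rightarrow> nat \<Rightarrow> bmat \<Rightarrow> bool" where
  "clarified n m I \<longleftrightarrow>
     (\<forall>i1\<in>rowsX n. \<forall>i2\<in>rowsX n. (\<forall>j\<in>colsY m. I i1 j = I i2 j) \<longrightarrow> i1 = i2) \<and>
     (\<forall>j1\<in>colsY m. \<forall>j2\<in>colsY m. (\<forall>i\<in>rowsX n. I i j1 = I i j2) \<longrightarrow> j1 = j2)"

definition up :: "nat \<Rightarrow> nat \<Rightarrow> bmat \<Rightarrow> nat set \<Rightarrow> nat set" where
  "up n m I C = {j\<in>colsY m. \<forall>i\<in>C. I i j}"

definition down :: "nat \<Rightarrow> nat \<Rightarrow> bmat \<Rightarrow> nat set \<Rightarrow> nat set" where
  "down n m I D = {i\<in>rowsX n. \<forall>j\<in>D. I i j}"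

definition concepts :: "nat \<Rightarrow> nat \<Rightarrow> bmat \<Rightarrow> (nat set \<times> nat set) set" where
  "concepts n m I = {(C, D). C \<subseteq> rowsX n \<and> D \<subseteq> colsY m \<and> up n m I C = D \<and> down n m I D = C}"

definition concept_le :: "nat set \<times> nat set \<Rightarrow> nat set \<times> nat set \<Rightarrow> bool" where
  "concept_le c1 c2 \<longleftrightarrow> fst c1 \<subseteq> fst c2"

definition gamma :: "nat \<Rightarrow> nat \<Rightarrow> bmat \<Rightarrow> nat \<Rightarrow> nat set \<times> nat set" where
  "gamma n m I i = (down n m I (up n m I {i}), up n m I {i})"

definition mu :: "nat \<Rightarrow> nat \<Rightarrow> bmat \<Rightarrow> nat \<Rightarrow> nat set \<times> nat set" where
  "mu n m I j = (down n m I {j}, up n m I (down n m I {j}))"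

definition interval :: "nat \<Rightarrow> nat \<Rightarrow> bmat \<Rightarrow> nat \<Rightarrow> nat \<Rightarrow> (nat set \<times> nat set) set" where
  "interval n m I i j = {c\<in>concepts n m I. concept_le (gamma n m I i) c \<and> concept_le c (mu n m I j)}"

definition essE :: "nat \<Rightarrow> nat \<Rightarrow> bmat \<Rightarrow> bmat" where
  "essE n m I i j \<longleftrightarrow> i \<in> rowsX n \<and> j \<in> colsY m \<and> interval n m I i j \<noteq> {} \<and>
     (\<forall>i'\<in>rowsX n. \<forall>j'\<in>colsY m. interval n m I i' j' \<noteq> {} \<longrightarrow>
        \<not> (interval n m I i' j' \<subset> interval n m I i j))"

text \<open>Boolean product A_F o B_F for a set F of concepts, the inner index l ranging over F:
 (A_F o B_F)_ij = max_l min((A_F)_il, (B_F)_lj) with (A_F)_il = [i in C_l], (B_F)_lj = [j in D_l].\<close>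
definition AF :: "(nat set \<times> nat set) set \<Rightarrow> nat \<Rightarrow> (nat set \<times> nat set) \<Rightarrow> bool" where
  "AF F i l \<longleftrightarrow> l \<in> F \<and> i \<in> fst l"

definition BF :: "(nat set \<times> nat set) set \<Rightarrow> (nat set \<times> nat set) \<Rightarrow> nat \<Rightarrow> bool" where
  "BF F l j \<longleftrightarrow> l \<in> F \<and> j \<in> snd l"

definition bool_prod :: "(nat \<Rightarrow> 'l \<Rightarrow> bool) \<Rightarrow> 'l set \<Rightarrow> ('l \<Rightarrow> nat \<Rightarrow> bool) \<Rightarrow> bmat" where
  "bool_prod A L B i j \<longleftrightarrow> (\<exists>l\<in>L. A i l \<and> B l j)"

definition covers_if :: "nat \<Rightarrow> nat \<Rightarrow> bmat \<Rightarrow> bmat \<Rightarrow> bool" where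
  "covers_if n m I J \<longleftrightarrow> (\<forall>F. F \<subseteq> concepts n m I \<longrightarrow>
      mat_leq n m J (bool_prod (AF F) F (BF F)) \<longrightarrow> mat_eq n m I (bool_prod (AF F) F (BF F)))"

definition essential_part :: "nat \<Rightarrow> nat \<Rightarrow> bmat \<Rightarrow> bmat \<Rightarrow> bool" where
  "essential_part n m I J \<longleftrightarrow> mat_leq n m J I \<and> covers_if n m I J \<and>
     (\<forall>J'. mat_leq n m J' I \<longrightarrow> covers_if n m I J' \<longrightarrow> mat_leq n m J' J \<longrightarrow> mat_eq n m J' J)"

end

theory Submission
  imports Defs
begin

text \<open>The interval of an incidence (i, j) consists of the concepts whose extent contains i and
whose intent contains j. Hence a family F of concepts covers (i, j) exactly when it meets the
interval of (i, j), and nonempty intervals are exactly the incidences of I. If the minimal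
intervals are covered, every interval is covered, since every nonempty interval contains a
minimal one; so the essential entries form a sufficient part of I. Conversely, if J misses
an essential entry (i, j), the family of all concepts outside the interval of (i, j) still
covers J, because in a clarified context no other entry has the same interval and none has a
smaller one; but it does not cover (i, j). So every sufficient J contains the essential
entries.\<close>

lemma concept_le_gamma_iff:
  assumes "(C, D) \<in> concepts n m I" and "i \<in> rowsX n"
  shows "concept_le (gamma n m I i) (C, D) \<longleftrightarrow> i \<in> C"
  using assms unfolding concepts_def concept_le_def gamma_def up_def down_def by auto

lemma concept_le_mu_iff:
  assumes "(C, D) \<in> concepts n m I" and "j \<in> colsY m"
  shows "concept_le (C, D) (mu n m I j) \<longleftrightarrow> j \<in> D"
  using assms unfolding concepts_def concept_le_def mu_def up_def down_def by auto

lemma mem_interval_iff: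
  assumes "i \<in> rowsX n" and "j \<in> colsY m"
  shows "c \<in> interval n m I i j \<longleftrightarrow> c \<in> concepts n m I \<and> i \<in> fst c \<and> j \<in> snd c"
  using assms concept_le_gamma_iff concept_le_mu_iff unfolding interval_def
  by (cases c) auto

lemma gamma_in_concepts: "i \<in> rowsX n \<Longrightarrow> gamma n m I i \<in> concepts n m I"
  unfolding concepts_def gamma_def up_def down_def by auto

lemma mu_in_concepts: "j \<in> colsY m \<Longrightarrow> mu n m I j \<in> concepts n m I"
  unfolding concepts_def mu_def up_def down_def by auto

lemma mem_fst_gamma_iff:
  "i' \<in> fst (gamma n m I i) \<longleftrightarrow> i' \<in> rowsX n \<and> (\<forall>j\<in>colsY m. I i j \<longrightarrow> I i' j)"
  unfolding gamma_def up_def down_def by auto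

lemma mem_snd_mu_iff:
  "j' \<in> snd (mu n m I j) \<longleftrightarrow> j' \<in> colsY m \<and> (\<forall>i\<in>rowsX n. I i j \<longrightarrow> I i j')"
  unfolding mu_def up_def down_def by auto

lemma gamma_mem_interval:
  assumes "i \<in> rowsX n" "j \<in> colsY m" "I i j"
  shows "gamma n m I i \<in> interval n m I i j"
  using assms gamma_in_concepts mem_interval_iff
  by (auto simp: gamma_def up_def down_def)

lemma mu_mem_interval:
  assumes "i \<in> rowsX n" "j \<in> colsY m" "I i j"
  shows "mu n m I j \<in> interval n m I i j"
  using assms mu_in_concepts mem_interval_iff
  by (auto simp: mu_def up_def down_def)

lemma interval_nonempty_iff:
  assumes "i \<in> rowsX n" and "j \<in> colsY m"
  shows "interval n m I i j \<noteq> {} \<longleftrightarrow> I i j"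
proof
  assume "interval n m I i j \<noteq> {}"
  then obtain c where "c \<in> concepts n m I" "i \<in> fst c" "j \<in> snd c"
    using mem_interval_iff[OF assms] by blast
  then show "I i j" unfolding concepts_def up_def by auto
qed (use gamma_mem_interval[OF assms] in blast)

lemma interval_eq_imp_eq:
  assumes "clarified n m I" and "I i j" and eq: "interval n m I i' j' = interval n m I i j"
    and i: "i \<in> rowsX n" and j: "j \<in> colsY m" and i': "i' \<in> rowsX n" and j': "j' \<in> colsY m"
  shows "i' = i \<and> j' = j"
proof -
  have "I i' j'"
    using \<open>I i j\<close> eq interval_nonempty_iff[OF i j, of I] interval_nonempty_iff[OF i' j', of I]
    by simp
  have shared: "i \<in> fst c \<and> j \<in> snd c \<and> i' \<in> fst c \<and> j' \<in> snd c"
    if "c \<in> interval n m I i j" for c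
    using that eq mem_interval_iff[OF i j] mem_interval_iff[OF i' j'] by metis
  have "i' \<in> fst (gamma n m I i)" "i \<in> fst (gamma n m I i')"
    using shared gamma_mem_interval[where I = I, OF i j \<open>I i j\<close>]
      gamma_mem_interval[where I = I, OF i' j' \<open>I i' j'\<close>] eq by auto
  then have "\<forall>y\<in>colsY m. I i y = I i' y" by (auto simp: mem_fst_gamma_iff)
  moreover have "j' \<in> snd (mu n m I j)" "j \<in> snd (mu n m I j')"
    using shared mu_mem_interval[where I = I, OF i j \<open>I i j\<close>]
      mu_mem_interval[where I = I, OF i' j' \<open>I i' j'\<close>] eq by auto
  then have "\<forall>x\<in>rowsX n. I x j = I x j'" by (auto simp: mem_snd_mu_iff)
  ultimately show ?thesis
    using \<open>clarified n m I\<close> i j i' j' unfolding clarified_def by auto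
qed

lemma finite_concepts: "finite (concepts n m I)"
proof (rule finite_subset)
  show "concepts n m I \<subseteq> Pow (rowsX n) \<times> Pow (colsY m)"
    unfolding concepts_def by auto
qed (simp add: rowsX_def colsY_def)

lemma ex_essE_interval_subset:
  assumes "i \<in> rowsX n" "j \<in> colsY m" "I i j"
  shows "\<exists>i'\<in>rowsX n. \<exists>j'\<in>colsY m. essE n m I i' j' \<and> interval n m I i' j' \<subseteq> interval n m I i j"
proof -
  define \<I> where "\<I> = {interval n m I i' j' | i' j'. i' \<in> rowsX n \<and> j' \<in> colsY m \<and> I i' j'}"
  have "\<I> \<subseteq> Pow (concepts n m I)"
    unfolding \<I>_def interval_def by auto
  then have "finite \<I>"
    using finite_concepts by (metis finite_Pow_iff finite_subset)
  moreover have "interval n m I i j \<in> \<I>" using assms unfolding \<I>_def by blast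
  ultimately obtain K where "K \<in> \<I>" and sub: "K \<subseteq> interval n m I i j"
      and min: "\<forall>K'\<in>\<I>. K' \<subseteq> K \<longrightarrow> K = K'"
    using finite_has_minimal2 by metis
  then obtain i' j' where i': "i' \<in> rowsX n" and j': "j' \<in> colsY m" and "I i' j'"
      and K: "K = interval n m I i' j'"
    unfolding \<I>_def by blast
  have "essE n m I i' j'"
    unfolding essE_def
  proof (intro conjI ballI impI)
    fix i'' j'' assume "i'' \<in> rowsX n" "j'' \<in> colsY m" "interval n m I i'' j'' \<noteq> {}"
    then have "interval n m I i'' j'' \<in> \<I>"
      unfolding \<I>_def using interval_nonempty_iff by blast
    then show "\<not> interval n m I i'' j'' \<subset> interval n m I i' j'"
      using min K by blast
  qed (use i' j' \<open>I i' j'\<close> interval_nonempty_iff in auto)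
  then show ?thesis using i' j' sub K by blast
qed

lemma bool_prod_AF_BF_iff:
  "bool_prod (AF F) F (BF F) i j \<longleftrightarrow> (\<exists>c\<in>F. i \<in> fst c \<and> j \<in> snd c)"
  unfolding bool_prod_def AF_def BF_def by auto

lemma bool_prod_AF_BF_iff_interval:
  assumes "F \<subseteq> concepts n m I" "i \<in> rowsX n" "j \<in> colsY m"
  shows "bool_prod (AF F) F (BF F) i j \<longleftrightarrow> F \<inter> interval n m I i j \<noteq> {}"
  using assms(1) mem_interval_iff[OF assms(2,3)] unfolding bool_prod_AF_BF_iff by blast

lemma bool_prod_AF_BF_le:
  assumes "F \<subseteq> concepts n m I" "bool_prod (AF F) F (BF F) i j"
  shows "I i j"
  using assms unfolding bool_prod_AF_BF_iff concepts_def up_def by auto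

lemma essE_le: "mat_leq n m (essE n m I) I"
  unfolding mat_leq_def essE_def using interval_nonempty_iff by auto

lemma covers_if_essE: "covers_if n m I (essE n m I)"
  unfolding covers_if_def
proof (intro allI impI)
  fix F assume F: "F \<subseteq> concepts n m I"
    and le: "mat_leq n m (essE n m I) (bool_prod (AF F) F (BF F))"
  show "mat_eq n m I (bool_prod (AF F) F (BF F))"
    unfolding mat_eq_def
  proof (intro ballI iffI)
    fix i j assume i: "i \<in> rowsX n" and j: "j \<in> colsY m" and "I i j"
    then obtain i' j' where i': "i' \<in> rowsX n" and j': "j' \<in> colsY m" and "essE n m I i' j'"
        and sub: "interval n m I i' j' \<subseteq> interval n m I i j"
      using ex_essE_interval_subset by metis
    then have "bool_prod (AF F) F (BF F) i' j'"
      using le unfolding mat_leq_def by blast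
    then have "F \<inter> interval n m I i' j' \<noteq> {}"
      using bool_prod_AF_BF_iff_interval[OF F i' j'] by simp
    with sub show "bool_prod (AF F) F (BF F) i j"
      using bool_prod_AF_BF_iff_interval[OF F i j] by auto
  qed (use F bool_prod_AF_BF_le in metis)
qed

lemma essE_le_if_covers_if:
  assumes cl: "clarified n m I" and JI: "mat_leq n m J I" and cov: "covers_if n m I J"
  shows "mat_leq n m (essE n m I) J"
  unfolding mat_leq_def
proof (intro ballI impI)
  fix i j assume i: "i \<in> rowsX n" and j: "j \<in> colsY m" and ess: "essE n m I i j"
  then have "I i j" using essE_le unfolding mat_leq_def by metis
  define F where "F = concepts n m I - interval n m I i j"
  have F: "F \<subseteq> concepts n m I" unfolding F_def by auto
  have "\<not> bool_prod (AF F) F (BF F) i j"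
    using bool_prod_AF_BF_iff_interval[OF F i j] unfolding F_def by auto
  then have "\<not> mat_eq n m I (bool_prod (AF F) F (BF F))"
    using \<open>I i j\<close> i j unfolding mat_eq_def by auto
  then have "\<not> mat_leq n m J (bool_prod (AF F) F (BF F))"
    using cov F unfolding covers_if_def by auto
  then obtain i' j' where i': "i' \<in> rowsX n" and j': "j' \<in> colsY m" and "J i' j'"
      and "F \<inter> interval n m I i' j' = {}"
    unfolding mat_leq_def by (auto simp: bool_prod_AF_BF_iff_interval[OF F])
  then have sub: "interval n m I i' j' \<subseteq> interval n m I i j"
    unfolding F_def interval_def by auto
  have "I i' j'" using JI i' j' \<open>J i' j'\<close> unfolding mat_leq_def by auto
  then have "\<not> interval n m I i' j' \<subset> interval n m I i j"
    using ess i' j' interval_nonempty_iff unfolding essE_def by auto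
  with sub have "i' = i \<and> j' = j"
    using interval_eq_imp_eq[OF cl \<open>I i j\<close> _ i j i' j'] by auto
  then show "J i j" using \<open>J i' j'\<close> by auto
qed

lemma mat_leq_antisym: "mat_leq n m J J' \<Longrightarrow> mat_leq n m J' J \<Longrightarrow> mat_eq n m J J'"
  unfolding mat_leq_def mat_eq_def by auto

theorem theorem2:
  fixes n m :: nat and I :: bmat
  assumes "clarified n m I"
  shows "essential_part n m I (essE n m I)
       \<and> mat_leq n m (essE n m I) I
       \<and> covers_if n m I (essE n m I)
       \<and> (\<forall>J. mat_leq n m J I \<longrightarrow> covers_if n m I J \<longrightarrow> mat_leq n m (essE n m I) J)
       \<and> (\<forall>J. essential_part n m I J \<longrightarrow> mat_eq n m J (essE n m I))"
proof -
  have least: "mat_leq n m (essE n m I) J" if "mat_leq n m J I" "covers_if n m I J" for J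
    using essE_le_if_covers_if[OF assms that] .
  have "essential_part n m I (essE n m I)"
    unfolding essential_part_def
    using essE_le covers_if_essE least mat_leq_antisym by simp
  moreover have "mat_eq n m J (essE n m I)" if "essential_part n m I J" for J
  proof (rule mat_leq_antisym)
    show "mat_leq n m (essE n m I) J"
      using that least unfolding essential_part_def by simp
    then have "mat_eq n m (essE n m I) J"
      using that essE_le covers_if_essE unfolding essential_part_def by simp
    then show "mat_leq n m J (essE n m I)"
      unfolding mat_eq_def mat_leq_def by simp
  qed
  ultimately show ?thesis using essE_le covers_if_essE least by simp
qed
end
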